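(* Let $\mathfrak A^{(0)}_{-1}(q;t):=\mathrm{tr}_{\mathcal F^{-1}_{(0)}}\big(q^{L_0}\mathsf A(t)\big)$. Then $$\mathfrak A^{(0)}_{-1}(q;t)=\frac{{}_2\Phi_1(0,0;q;q)}{t^{-1/2}-t^{1/2}}+t^{1/2}\sum_{i=1}^\infty\frac{q^{i-1}}{(q)_{i-1}(q)_{i-1}}\big({}_3\Phi_2(0,0,q;tq^i,q^i;q)-1\big) -t^{-1/2}\sum_{i=1}^\infty\frac{q^{i-1}}{(q)_{i-1}(q)_{i-1}}\big({}_3\Phi_2(0,0,q;t^{-1}q^i,q^i;q)-1\big).$$
   Context: Let $\mathcal F^{-1}$ be the bosonic Fock space generated from a vacuum $|0\rangle$ by commuting creation operators $\gamma^+_{-r},\gamma^-_{-r}$, $r\in\frac12+\mathbb Z_{\ge0}$ (with $[\gamma^+_r,\gamma^-_s]=\delta_{r+s,0}$, all other brackets zero, $\gamma^\pm_r|0\rangle=0$ for $r>0$). It has basis $v=\gamma^+_{-r_1}\cdots\gamma^+_{-r_a}\gamma^-_{-s_1}\cdots\gamma^-_{-s_b}|0\rangle$ with $r_1\ge\cdots\ge r_a>0$, $s_1\ge\cdots\ge s_b>0$ in $\frac12+\mathbb Z$. $L_0$ acts on $v$ by $\sum_i r_i+\sum_j s_j$. $\mathcal F^{-1}_{(m)}$ is the span of basis vectors with $a-b=m$. The operator $\mathsf A(t)=-\sum_{r\in\frac12+\mathbb Z}t^r\gamma^+_{-r}\gamma^-_r$ acts diagonally: $\mathsf A(t)v=\big(\sum_{i}t^{r_i}-\sum_j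 t^{-s_j}+\frac{1}{t^{-1/2}-t^{1/2}}\big)v$. Notation: $(a)_n=(1-a)\cdots(1-aq^{n-1})$, $(a)_0=1$, $(a)_\infty=\prod_{i\ge0}(1-aq^i)$, and ${}_r\Phi_s(a_1,\dots,a_r;b_1,\dots,b_s;z)=\sum_{n\ge0}\frac{(a_1)_n\cdots(a_r)_n}{(b_1)_n\cdots(b_s)_n(q)_n}\big((-1)^nq^{n(n-1)/2}\big)^{1+s-r}z^n$. *)

theory Defs
  imports "HOL-Computational_Algebra.Formal_Power_Series" "HOL-Library.Multiset"
begin

text \<open>All q-series are formal power series in q (= fps_X) over the complex numbers.
  The parameter t enters through s = t^(1/2), a fixed nonzero complex number.\<close>

abbreviation qq :: "complex fps" where "qq \<equiv> fps_X"

definition qpoch :: "complex fps \<Rightarrow> nat \<Rightarrow> complex fps" where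
  "qpoch a n = (\<Prod>k<n. 1 - a * qq ^ k)"

text \<open>The exponent is taken in nat, which is exact
  whenever r <= s+1 (the only cases used here, where it is 0).\<close>
definition qPhi :: "complex fps list \<Rightarrow> complex fps list \<Rightarrow> complex fps \<Rightarrow> complex fps" where
  "qPhi as bs z = (\<Sum>n. (\<Prod>a\<leftarrow>as. qpoch a n)
       * inverse ((\<Prod>b\<leftarrow>bs. qpoch b n) * qpoch qq n)
       * ((-1) ^ n * qq ^ (n * (n - 1) div 2)) ^ (Suc (length bs) - length as)
       * z ^ n)"

text \<open>Basis vectors of F^{-1}: a pair (A,B) of multisets of naturals, where k in A stands for
  the factor gamma^+_{-(k+1/2)} and l in B for gamma^-_{-(l+1/2)}.
  Charge a-b = size A - size B. The L_0 eigenvalue is sum (k+1/2) + sum (l+1/2);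
  in charge 0 this is the integer sum A + sum B + size A.\<close>
definition L0_charge0 :: "nat multiset \<Rightarrow> nat multiset \<Rightarrow> nat" where
  "L0_charge0 A B = sum_mset A + sum_mset B + size A"

text \<open>Eigenvalue of A(t) on the basis vector (A,B), with t^(k+1/2) = s^(2k+1).\<close>
definition A_eig :: "complex \<Rightarrow> nat multiset \<Rightarrow> nat multiset \<Rightarrow> complex" where
  "A_eig s A B = (\<Sum>k\<in>#A. s ^ (2*k+1)) - (\<Sum>l\<in>#B. inverse (s ^ (2*l+1)))
                 + 1 / (inverse s - s)"

definition trace_A0 :: "complex \<Rightarrow> complex fps" where
  "trace_A0 s = Abs_fps (\<lambda>n. \<Sum>(A,B)\<in>{(A,B). size A = size B \<and> L0_charge0 A B = n}. A_eig s A B)"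

end

theory Submission
  imports Defs
begin

(* A basis vector of charge 0 is a pair (A,B) of multisets of size m with
   L0 = sum A + sum B + m, so the trace is a sum over m of q^m times products of
   generating functions of multisets of naturals of size m, graded by their sum:
     C_m      = sum_A q^(sum A)                            = 1/(q)_m,
     W_u(m)   = sum_A q^(sum A) (sum_{x in A} u^(2x+1))    = u * E(u^2, m),
   where E(c,m) = sum_{j<m} 1/((q)_j (c q^(j+1))_(m-j)).  Both closed forms follow by
   induction on m from the recursion obtained by splitting multisets according to
   whether they contain 0 (otherwise they are images under Suc).  This gives
     trace = sum_m q^m (s E(s^2,m)/(q)_m - s^-1 E(s^-2,m)/(q)_m + C_m^2/(s^-1-s)).
   On the series side, 2Phi1(0,0;q;q) = sum_m q^m/(q)_m^2, and the double series
   sum_j q^j/(q)_j^2 (3Phi2(0,0,q; c q^(j+1), q^(j+1); q) - 1) regrouped along the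
   diagonals j+k = m equals sum_m q^m E(c,m)/(q)_m.  All infinite sums involved have
   terms of increasing q-order, so everything is compared coefficientwise through
   finite truncations. *)

unbundle fps_syntax

section \<open>Multisets of naturals of given size and sum\<close>

definition msets :: "nat \<Rightarrow> nat \<Rightarrow> nat multiset set" where
  "msets m k = {A. size A = m \<and> sum_mset A = k}"

text \<open>Every element of such a multiset is at most k, so there are finitely many.\<close>
lemma finite_msets: "finite (msets m k)"
proof -
  have "x \<le> sum_mset A" if "x \<in># A" for x and A :: "nat multiset"
    using that by (metis le_add1 multi_member_split sum_mset.add_mset)
  then have "msets m k \<subseteq> multisets_of_size {0..k} m"
    by (auto simp: msets_def multisets_of_size_def)
  then show ?thesis by (rule finite_subset) auto
qed

lemma msets_0: "msets 0 k = (if k = 0 then {{#}} else {})"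
  by (auto simp: msets_def)

lemma sum_mset_image_Suc: "sum_mset (image_mset Suc B) = sum_mset B + size B"
  by (induction B) auto

lemma image_Suc_shift: "0 \<notin># (A :: nat multiset) \<Longrightarrow> A = image_mset Suc (image_mset (\<lambda>x. x - 1) A)"
  by (induction A) auto

lemma inj_image_Suc: "inj_on (image_mset Suc) X"
  by (rule inj_on_inverseI[where g = "image_mset (\<lambda>x. x - 1)"])
     (simp add: multiset.map_comp comp_def)

lemma msets_Suc:
  "msets (Suc m) k = add_mset 0 ` msets m k
     \<union> (if Suc m \<le> k then image_mset Suc ` msets (Suc m) (k - Suc m) else {})"
proof (intro equalityI subsetI)
  fix A assume A: "A \<in> msets (Suc m) k"
  show "A \<in> add_mset 0 ` msets m k
     \<union> (if Suc m \<le> k then image_mset Suc ` msets (Suc m) (k - Suc m) else {})"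
  proof (cases "0 \<in># A")
    case True
    then obtain B where "A = add_mset 0 B" by (metis multi_member_split)
    then show ?thesis using A by (auto simp: msets_def)
  next
    case False
    define B where "B = image_mset (\<lambda>x. x - 1) A"
    have AB: "A = image_mset Suc B" using image_Suc_shift[OF False] by (simp add: B_def)
    then have "sum_mset A = sum_mset B + Suc m" "size B = Suc m"
      using A by (auto simp: msets_def sum_mset_image_Suc)
    then show ?thesis using A AB by (auto simp: msets_def)
  qed
qed (auto split: if_splits simp: msets_def sum_mset_image_Suc)

lemma add0_ne_image_Suc: "add_mset 0 A \<noteq> image_mset Suc (B :: nat multiset)"
proof
  assume eq: "add_mset 0 A = image_mset Suc B"
  have "0 \<in># add_mset 0 A" by simp
  then have "0 \<in># image_mset Suc B" unfolding eq .
  then show False by auto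
qed

lemma sum_msets_Suc:
  "(\<Sum>A\<in>msets (Suc m) k. (\<phi> A :: complex)) = (\<Sum>B\<in>msets m k. \<phi> (add_mset 0 B))
     + (if Suc m \<le> k then (\<Sum>B\<in>msets (Suc m) (k - Suc m). \<phi> (image_mset Suc B)) else 0)"
proof -
  have "add_mset 0 ` msets m k \<inter> image_mset Suc ` msets (Suc m) (k - Suc m) = {}"
    using add0_ne_image_Suc by blast
  then have "(\<Sum>A\<in>msets (Suc m) k. \<phi> A) = sum \<phi> (add_mset 0 ` msets m k)
      + sum \<phi> (if Suc m \<le> k then image_mset Suc ` msets (Suc m) (k - Suc m) else {})"
    by (subst msets_Suc, intro sum.union_disjoint) (auto simp: finite_msets)
  moreover have "inj_on (add_mset 0) (msets m k)"
    by (auto simp: inj_on_def)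
  ultimately show ?thesis
    by (simp add: sum.reindex[OF inj_image_Suc] sum.reindex)
qed

section \<open>Generating functions of multisets of fixed size\<close>

definition mset_gf :: "(nat multiset \<Rightarrow> complex) \<Rightarrow> nat \<Rightarrow> complex fps" where
  "mset_gf \<phi> m = Abs_fps (\<lambda>k. \<Sum>A\<in>msets m k. \<phi> A)"

abbreviation mset_count :: "nat \<Rightarrow> complex fps" where
  "mset_count \<equiv> mset_gf (\<lambda>_. 1)"

definition pow_weight :: "complex \<Rightarrow> nat multiset \<Rightarrow> complex" where
  "pow_weight u A = (\<Sum>x\<in>#A. u ^ (2*x+1))"

lemma mset_gf_nth: "mset_gf \<phi> m $ k = (\<Sum>A\<in>msets m k. \<phi> A)"
  by (simp add: mset_gf_def)

lemma mset_gf_0: "mset_gf \<phi> 0 = fps_const (\<phi> {#})"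
  by (rule fps_ext) (simp add: mset_gf_nth msets_0)

text \<open>The splitting msets_Suc on the level of generating functions: the multisets
  that avoid 0 come from shifting a multiset of size m+1, which contributes q^(m+1).\<close>
lemma mset_gf_Suc_nth:
  "mset_gf \<phi> (Suc m) $ k = mset_gf (\<lambda>B. \<phi> (add_mset 0 B)) m $ k
     + (qq ^ Suc m * mset_gf (\<lambda>B. \<phi> (image_mset Suc B)) (Suc m)) $ k"
  by (simp add: mset_gf_nth sum_msets_Suc fps_X_power_mult_nth del: power_Suc)

lemma mset_count_rec: "mset_count (Suc m) = mset_count m + qq ^ Suc m * mset_count (Suc m)"
  by (rule fps_ext) (simp only: mset_gf_Suc_nth fps_add_nth)

lemma pow_weight_add0: "pow_weight u (add_mset 0 B) = u + pow_weight u B"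
  by (simp add: pow_weight_def)

lemma pow_weight_Suc: "pow_weight u (image_mset Suc B) = u^2 * pow_weight u B"
  by (induction B) (auto simp: pow_weight_def algebra_simps power2_eq_square)

lemma mset_weight_rec:
  "mset_gf (pow_weight u) (Suc m) = mset_gf (pow_weight u) m + fps_const u * mset_count m
     + qq ^ Suc m * (fps_const (u^2) * mset_gf (pow_weight u) (Suc m))"
proof (rule fps_ext)
  fix k
  have "mset_gf (\<lambda>B. pow_weight u (add_mset 0 B)) m $ k
      = mset_gf (pow_weight u) m $ k + (fps_const u * mset_count m) $ k"
    by (simp add: mset_gf_nth pow_weight_add0 sum.distrib)
  moreover have "mset_gf (\<lambda>B. pow_weight u (image_mset Suc B)) (Suc m)
      = fps_const (u^2) * mset_gf (pow_weight u) (Suc m)"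
    by (rule fps_ext) (simp add: mset_gf_nth pow_weight_Suc sum_distrib_left)
  ultimately show "mset_gf (pow_weight u) (Suc m) $ k = (mset_gf (pow_weight u) m
      + fps_const u * mset_count m + qq ^ Suc m * (fps_const (u^2) * mset_gf (pow_weight u) (Suc m))) $ k"
    by (simp only: mset_gf_Suc_nth fps_add_nth)
qed

section \<open>The trace as a sum over the common size of the two multisets\<close>

definition charge0_basis :: "nat \<Rightarrow> (nat multiset \<times> nat multiset) set" where
  "charge0_basis n = {(A,B). size A = size B \<and> L0_charge0 A B = n}"

lemma charge0_basis_eq:
  "charge0_basis n = (\<Union>m<Suc n. \<Union>i\<in>{0..n-m}. msets m i \<times> msets m (n-m-i))"
  by (auto simp: charge0_basis_def msets_def L0_charge0_def)

lemma sum_charge0_basis: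
  "sum (f :: _ \<Rightarrow> complex) (charge0_basis n) =
     (\<Sum>m<Suc n. \<Sum>i=0..n-m. \<Sum>A\<in>msets m i. \<Sum>B\<in>msets m (n-m-i). f (A,B))"
proof -
  have "sum f (charge0_basis n) = (\<Sum>m<Suc n. sum f (\<Union>i\<in>{0..n-m}. msets m i \<times> msets m (n-m-i)))"
    unfolding charge0_basis_eq
    by (rule sum.UNION_disjoint) (simp, simp add: finite_msets, auto simp: msets_def)
  also have "\<dots> = (\<Sum>m<Suc n. \<Sum>i=0..n-m. sum f (msets m i \<times> msets m (n-m-i)))"
    by (intro sum.cong refl sum.UNION_disjoint) (simp, simp add: finite_msets, auto simp: msets_def)
  finally show ?thesis by (simp add: sum.cartesian_product)
qed

lemma A_eig_eq: "A_eig s A B = pow_weight s A - pow_weight (inverse s) B + 1 / (inverse s - s)"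
  by (simp add: A_eig_def pow_weight_def power_inverse)

lemma size_block_nth:
  "(mset_gf (pow_weight s) m * mset_count m - mset_count m * mset_gf (pow_weight (inverse s)) m
      + fps_const c * (mset_count m * mset_count m)) $ k
   = (\<Sum>i=0..k. (\<Sum>A\<in>msets m i. pow_weight s A) * (\<Sum>B\<in>msets m (k-i). 1)
        - (\<Sum>A\<in>msets m i. 1) * (\<Sum>B\<in>msets m (k-i). pow_weight (inverse s) B)
        + c * ((\<Sum>A\<in>msets m i. 1) * (\<Sum>B\<in>msets m (k-i). 1)))"
  by (simp only: fps_add_nth fps_sub_nth fps_mult_left_const_nth)
     (simp only: fps_mult_nth mset_gf_nth sum_subtractf sum.distrib sum_distrib_left[symmetric])

lemma trace_A0_nth:
  "trace_A0 s $ n = (\<Sum>m<Suc n. qq^m * (mset_gf (pow_weight s) m * mset_count m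
      - mset_count m * mset_gf (pow_weight (inverse s)) m
      + fps_const (1 / (inverse s - s)) * (mset_count m * mset_count m))) $ n"
proof -
  define c where "c = 1 / (inverse s - s)"
  have "trace_A0 s $ n = sum (\<lambda>(A,B). A_eig s A B) (charge0_basis n)"
    by (simp add: trace_A0_def charge0_basis_def)
  also have "\<dots> = (\<Sum>m<Suc n. \<Sum>i=0..n-m. \<Sum>A\<in>msets m i. \<Sum>B\<in>msets m (n-m-i).
      pow_weight s A * 1 - 1 * pow_weight (inverse s) B + c * (1 * 1))"
    by (simp add: sum_charge0_basis A_eig_eq c_def)
  also have "\<dots> = (\<Sum>m<Suc n. (mset_gf (pow_weight s) m * mset_count m
      - mset_count m * mset_gf (pow_weight (inverse s)) m
      + fps_const c * (mset_count m * mset_count m)) $ (n - m))"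
    unfolding size_block_nth sum_product by (simp only: sum_subtractf sum.distrib sum_distrib_left)
  finally show ?thesis
    by (simp add: fps_sum_nth fps_X_power_mult_nth c_def)
qed

section \<open>Closed forms of the generating functions\<close>

abbreviation qinv :: "nat \<Rightarrow> complex fps" where
  "qinv j \<equiv> inverse (qpoch qq j)"

definition cpoch :: "complex \<Rightarrow> nat \<Rightarrow> nat \<Rightarrow> complex fps" where
  "cpoch c j k = qpoch (fps_const c * qq^(j+1)) k"

text \<open>Closed form E(c,m) of the generating function of sum_{x in A} c^x over the
  multisets A of size m.\<close>
definition power_sum_gf :: "complex \<Rightarrow> nat \<Rightarrow> complex fps" where
  "power_sum_gf c m = (\<Sum>j<m. qinv j * inverse (cpoch c j (m-j)))"

text \<open>Elementary facts on q-Pochhammer symbols; (q)_k is invertible as its constant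
  coefficient is 1.\<close>
lemma qpoch_0 [simp]: "qpoch a 0 = 1"
  by (simp add: qpoch_def)

lemma qpoch_zero [simp]: "qpoch 0 n = 1"
  by (simp add: qpoch_def)

lemma qpoch_Suc: "qpoch a (Suc n) = qpoch a n * (1 - a * qq^n)"
  by (simp add: qpoch_def)

lemma qpoch_nth_0: "a $ 0 = 0 \<Longrightarrow> qpoch a n $ 0 = 1"
  by (induction n) (simp_all add: qpoch_Suc)

lemma qpoch_qinv: "qpoch qq k * qinv k = 1"
  by (intro inverse_mult_eq_1') (simp add: qpoch_nth_0)

lemma qpoch_split: "qpoch qq j * qpoch (qq^(j+1)) n = qpoch qq (j+n)"
proof (induction n)
  case (Suc n)
  have "qq ^ (j + 1) * qq ^ n = (qq * qq ^ (j + n) :: complex fps)"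
    by (simp add: power_add)
  then show ?case using Suc by (simp add: qpoch_Suc mult.assoc[symmetric])
qed simp

lemma solve_lin:
  fixes x b a :: "complex fps"
  assumes "x * (1 - a) = b" "a $ 0 = 0"
  shows "x = b * inverse (1 - a)"
proof -
  have "(1 - a) * inverse (1 - a) = 1" using assms(2) by (intro inverse_mult_eq_1') simp
  then have "x = x * ((1 - a) * inverse (1 - a))" by simp
  also have "\<dots> = b * inverse (1 - a)" using assms(1) by (simp add: mult.assoc[symmetric])
  finally show ?thesis .
qed

lemma mset_count_closed: "mset_count m = qinv m"
proof (induction m)
  case 0 then show ?case by (simp add: mset_gf_0)
next
  case (Suc m)
  have "mset_count (Suc m) * (1 - qq ^ Suc m) = mset_count m"
    using mset_count_rec[of m] by (simp add: algebra_simps del: power_Suc)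
  then have "mset_count (Suc m) = mset_count m * inverse (1 - qq ^ Suc m)"
    by (rule solve_lin) simp
  also have "\<dots> = inverse (qpoch qq m * (1 - qq * qq ^ m))"
    using Suc by (simp add: fps_inverse_mult)
  finally show ?case by (simp add: qpoch_Suc)
qed

text \<open>E(c,m) satisfies the same recursion as W_u(m)/u with c = u^2.\<close>
lemma power_sum_gf_Suc:
  "power_sum_gf c (Suc m) = (power_sum_gf c m + qinv m) * inverse (1 - fps_const c * qq ^ Suc m)"
proof -
  have cpoch_Suc: "cpoch c j (Suc m - j) = cpoch c j (m - j) * (1 - fps_const c * qq ^ Suc m)"
    if "j < m" for j
  proof -
    have "qq ^ (j + 1) * qq ^ (m - j) = (qq ^ Suc m :: complex fps)"
      using that by (simp flip: power_add)
    then show ?thesis using that by (simp add: cpoch_def Suc_diff_le qpoch_Suc mult.assoc)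
  qed
  have "power_sum_gf c (Suc m)
      = (\<Sum>j<m. qinv j * inverse (cpoch c j (Suc m - j))) + qinv m * inverse (cpoch c m 1)"
    by (simp add: power_sum_gf_def)
  also have "(\<Sum>j<m. qinv j * inverse (cpoch c j (Suc m - j))) =
      power_sum_gf c m * inverse (1 - fps_const c * qq ^ Suc m)"
    unfolding power_sum_gf_def sum_distrib_right
    by (rule sum.cong[OF refl]) (simp add: cpoch_Suc fps_inverse_mult mult.assoc)
  also have "cpoch c m 1 = 1 - fps_const c * qq ^ Suc m"
    by (simp add: cpoch_def qpoch_def)
  finally show ?thesis by (simp add: algebra_simps)
qed

lemma mset_weight_closed: "mset_gf (pow_weight u) m = fps_const u * power_sum_gf (u^2) m"
proof (induction m)
  case 0 then show ?case by (simp add: mset_gf_0 power_sum_gf_def pow_weight_def)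
next
  case (Suc m)
  have "mset_gf (pow_weight u) (Suc m) * (1 - fps_const (u^2) * qq ^ Suc m)
      = mset_gf (pow_weight u) m + fps_const u * mset_count m"
    using mset_weight_rec[of u m] by (simp add: algebra_simps del: power_Suc)
  then have "mset_gf (pow_weight u) (Suc m)
      = (mset_gf (pow_weight u) m + fps_const u * mset_count m)
        * inverse (1 - fps_const (u^2) * qq ^ Suc m)"
    by (rule solve_lin) simp
  also have "\<dots> = fps_const u * power_sum_gf (u^2) (Suc m)"
    unfolding Suc power_sum_gf_Suc mset_count_closed by (simp add: algebra_simps)
  finally show ?case .
qed

lemma trace_A0_closed_nth:
  "trace_A0 s $ n = (fps_const s * (\<Sum>m<Suc n. qq^m * (power_sum_gf (s\<^sup>2) m * qinv m))
      - fps_const (inverse s) * (\<Sum>m<Suc n. qq^m * (power_sum_gf (inverse (s\<^sup>2)) m * qinv m))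
      + fps_const (1 / (inverse s - s)) * (\<Sum>m<Suc n. qq^m * (qinv m * qinv m))) $ n"
  unfolding trace_A0_nth mset_weight_closed mset_count_closed power_inverse
    sum_distrib_left sum_subtractf[symmetric] sum.distrib[symmetric]
  by (rule arg_cong[where f = "\<lambda>f. f $ n"], rule sum.cong[OF refl]) (simp add: algebra_simps)

lemma partial_sum_nth:
  fixes f :: "nat \<Rightarrow> complex fps"
  assumes "\<And>m i. i < m \<Longrightarrow> f m $ i = 0" "n < N"
  shows "(\<Sum>m<N. f m) $ n = (\<Sum>m<Suc n. f m) $ n"
  unfolding fps_sum_nth by (rule sum.mono_neutral_right) (use assms in auto)

lemma suminf_fps_nth:
  fixes f :: "nat \<Rightarrow> complex fps"
  assumes "\<And>m i. i < m \<Longrightarrow> f m $ i = 0" "n < N"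
  shows "suminf f $ n = (\<Sum>m<N. f m) $ n"
proof -
  define S where "S = Abs_fps (\<lambda>i. (\<Sum>m<Suc i. f m) $ i)"
  have "f sums S"
    unfolding sums_def
  proof (rule tendsto_fpsI)
    fix i
    show "eventually (\<lambda>M. (\<Sum>m<M. f m) $ i = S $ i) sequentially"
      using eventually_ge_at_top[of "Suc i"]
      by eventually_elim (simp add: S_def partial_sum_nth[OF assms(1)])
  qed
  then have "suminf f = S" by (rule sums_unique[symmetric])
  then show ?thesis by (simp add: S_def partial_sum_nth[OF assms])
qed

lemma X_power_mult_nth_less: "i < j \<Longrightarrow> (qq ^ j * (A :: complex fps)) $ i = 0"
  by (simp add: fps_X_power_mult_nth)

lemma mult_nth_cong:
  fixes F G H :: "complex fps"
  assumes "\<And>i. i \<le> n \<Longrightarrow> F $ i = G $ i"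
  shows "(H * F) $ n = (H * G) $ n"
  unfolding fps_mult_nth using assms by (intro sum.cong) auto

section \<open>The basic hypergeometric series\<close>

lemma Phi21_eq: "qPhi [0, 0] [qq] qq = (\<Sum>m. qq^m * (qinv m * qinv m))"
  unfolding qPhi_def
  by (rule arg_cong[where f = suminf], rule ext) (simp add: fps_inverse_mult mult.commute)

text \<open>3Phi2(0,0,q; c q^(j+1), q^(j+1); q) written as a series; the factor (q)_k cancels.\<close>
lemma Phi32_eq: "qPhi [0, 0, qq] [fps_const c * qq^(j+1), qq^(j+1)] qq
   = (\<Sum>k. qq^k * (inverse (cpoch c j k) * inverse (qpoch (qq^(j+1)) k)))"
  unfolding qPhi_def
proof (rule arg_cong[where f = suminf], rule ext)
  fix k
  show "(\<Prod>a\<leftarrow>[0, 0, qq]. qpoch a k) *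
          inverse ((\<Prod>b\<leftarrow>[fps_const c * qq ^ (j + 1), qq ^ (j + 1)]. qpoch b k) * qpoch qq k) *
          ((- 1) ^ k * qq ^ (k * (k - 1) div 2)) ^ (Suc (length [fps_const c * qq ^ (j + 1), qq ^ (j + 1)]) -
           length [0, 0, qq]) * qq ^ k =
         qq ^ k * (inverse (cpoch c j k) * inverse (qpoch (qq ^ (j + 1)) k))"
    using qpoch_qinv[of k] by (simp add: cpoch_def fps_inverse_mult algebra_simps)
qed

text \<open>The (j, k+1) term of the double series sum_j q^j/(q)_j^2 (3Phi2 - 1); its q-order
  is j+k+1, and it only depends on that diagonal index through (q)_(j+k+1).\<close>
definition dterm :: "complex \<Rightarrow> nat \<Rightarrow> nat \<Rightarrow> complex fps" where
  "dterm c j k = qq^(j + Suc k) * (qinv j * qinv (j + Suc k) * inverse (cpoch c j (Suc k)))"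

lemma outer_term_nth:
  "(qq ^ j * inverse (qpoch qq j * qpoch qq j)
      * (qPhi [0, 0, qq] [fps_const c * qq ^ (j+1), qq ^ (j+1)] qq - 1)) $ n
   = (\<Sum>k<n. dterm c j k) $ n"
proof -
  define a where "a k = qq^k * (inverse (cpoch c j k) * inverse (qpoch (qq^(j+1)) k))" for k
  have "(qq ^ j * inverse (qpoch qq j * qpoch qq j)
          * (qPhi [0, 0, qq] [fps_const c * qq ^ (j+1), qq ^ (j+1)] qq - 1)) $ n
      = (qq ^ j * inverse (qpoch qq j * qpoch qq j) * (\<Sum>k<n. a (Suc k))) $ n"
  proof (rule mult_nth_cong)
    fix i assume "i \<le> n"
    have "a 0 = 1"
      by (simp add: a_def cpoch_def)
    from \<open>i \<le> n\<close> have "qPhi [0, 0, qq] [fps_const c * qq ^ (j+1), qq ^ (j+1)] qq $ i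
        = (\<Sum>k<Suc n. a k) $ i"
      unfolding Phi32_eq a_def[symmetric]
      by (intro suminf_fps_nth) (simp_all add: a_def X_power_mult_nth_less)
    also have "(\<Sum>k<Suc n. a k) = 1 + (\<Sum>k<n. a (Suc k))"
      by (simp only: sum.lessThan_Suc_shift \<open>a 0 = 1\<close>)
    finally show "(qPhi [0, 0, qq] [fps_const c * qq ^ (j+1), qq ^ (j+1)] qq - 1) $ i
        = (\<Sum>k<n. a (Suc k)) $ i"
      by simp
  qed
  also have "qq ^ j * inverse (qpoch qq j * qpoch qq j) * (\<Sum>k<n. a (Suc k)) = (\<Sum>k<n. dterm c j k)"
    unfolding sum_distrib_left
  proof (rule sum.cong[OF refl])
    fix k
    have "qinv j * inverse (qpoch (qq^(j+1)) (Suc k)) = qinv (j + Suc k)"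
      by (simp only: fps_inverse_mult[symmetric] qpoch_split)
    then show "qq ^ j * inverse (qpoch qq j * qpoch qq j) * a (Suc k) = dterm c j k"
      unfolding a_def dterm_def fps_inverse_mult power_add by (simp only: mult_ac)
  qed
  finally show ?thesis .
qed

lemma diagonal_sum: "qq^m * (power_sum_gf c m * qinv m) = (\<Sum>j<m. dterm c j (m - j - 1))"
  unfolding power_sum_gf_def sum_distrib_left sum_distrib_right
proof (rule sum.cong[OF refl])
  fix j assume "j \<in> {..<m}"
  then have "Suc (m - j - 1) = m - j" "j + (m - j) = m" by auto
  then show "qq ^ m * (qinv j * inverse (cpoch c j (m - j)) * qinv m) = dterm c j (m - j - 1)"
    unfolding dterm_def by (simp only: mult_ac)
qed

lemma Phi32_series_nth:
  "(\<Sum>j. qq ^ j * inverse (qpoch qq j * qpoch qq j)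
         * (qPhi [0, 0, qq] [fps_const c * qq ^ (j+1), qq ^ (j+1)] qq - 1)) $ n
   = (\<Sum>m<Suc n. qq^m * (power_sum_gf c m * qinv m)) $ n"
proof -
  define g where "g j k = dterm c j k $ n" for j k
  have g_zero: "g j k = 0" if "\<not> j + k < n" for j k
    unfolding g_def dterm_def by (rule X_power_mult_nth_less) (use that in simp)
  have "(\<Sum>j. qq ^ j * inverse (qpoch qq j * qpoch qq j)
         * (qPhi [0, 0, qq] [fps_const c * qq ^ (j+1), qq ^ (j+1)] qq - 1)) $ n
      = (\<Sum>j<Suc n. (qq ^ j * inverse (qpoch qq j * qpoch qq j)
         * (qPhi [0, 0, qq] [fps_const c * qq ^ (j+1), qq ^ (j+1)] qq - 1)) $ n)"
    unfolding fps_sum_nth[symmetric]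
    by (rule suminf_fps_nth) (simp_all add: mult.assoc X_power_mult_nth_less)
  also have "\<dots> = (\<Sum>(j,k)\<in>{..<Suc n} \<times> {..<n}. g j k)"
    by (simp only: outer_term_nth fps_sum_nth g_def sum.cartesian_product)
  also have "\<dots> = (\<Sum>(j,k)\<in>{(j,k). j + k < n}. g j k)"
    by (rule sum.mono_neutral_right) (auto intro!: g_zero)
  also have "\<dots> = (\<Sum>m<n. \<Sum>j\<le>m. g j (m - j))"
    by (rule sum.triangle_reindex)
  also have "\<dots> = (\<Sum>m<Suc n. \<Sum>j<m. g j (m - j - 1))"
    unfolding sum.lessThan_Suc_shift[of "\<lambda>m. \<Sum>j<m. g j (m - j - 1)" n]
    by (simp add: lessThan_Suc_atMost)
  also have "\<dots> = (\<Sum>m<Suc n. qq^m * (power_sum_gf c m * qinv m)) $ n"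
    by (simp add: diagonal_sum fps_sum_nth g_def)
  finally show ?thesis .
qed

theorem theorem2p4:
  fixes s :: complex
  assumes "s \<noteq> 0" and "s\<^sup>2 \<noteq> 1"
  shows "trace_A0 s =
      fps_const (1 / (inverse s - s)) * qPhi [0, 0] [qq] qq
    + fps_const s * (\<Sum>j. qq ^ j * inverse (qpoch qq j * qpoch qq j)
         * (qPhi [0, 0, qq] [fps_const (s\<^sup>2) * qq ^ (j+1), qq ^ (j+1)] qq - 1))
    - fps_const (inverse s) * (\<Sum>j. qq ^ j * inverse (qpoch qq j * qpoch qq j)
         * (qPhi [0, 0, qq] [fps_const (inverse (s\<^sup>2)) * qq ^ (j+1), qq ^ (j+1)] qq - 1))"
proof (rule fps_ext)
  fix n
  have Phi21_nth: "qPhi [0, 0] [qq] qq $ n = (\<Sum>m<Suc n. qq^m * (qinv m * qinv m)) $ n"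
    unfolding Phi21_eq by (rule suminf_fps_nth) (simp_all add: X_power_mult_nth_less)
  show "trace_A0 s $ n = (fps_const (1 / (inverse s - s)) * qPhi [0, 0] [qq] qq
    + fps_const s * (\<Sum>j. qq ^ j * inverse (qpoch qq j * qpoch qq j)
         * (qPhi [0, 0, qq] [fps_const (s\<^sup>2) * qq ^ (j+1), qq ^ (j+1)] qq - 1))
    - fps_const (inverse s) * (\<Sum>j. qq ^ j * inverse (qpoch qq j * qpoch qq j)
         * (qPhi [0, 0, qq] [fps_const (inverse (s\<^sup>2)) * qq ^ (j+1), qq ^ (j+1)] qq - 1))) $ n"
    unfolding trace_A0_closed_nth fps_add_nth fps_sub_nth fps_mult_left_const_nth
      Phi32_series_nth Phi21_nth
    by simp
qed

end
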